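(* For all $(n,k),(p,q)\in\mathcal{I}$, $\Delta_{p,q}(\psi_{n,k})=\delta^{n,k}_{p,q}\,I_d$, where $\delta^{n,k}_{p,q}$ equals $1$ if $(n,k)=(p,q)$ and $0$ otherwise. That is, the generalized functions $\delta_{p,q}$ form a dual family to the functions $\psi_{n,k}$.
   Context: Let $d,m\geq 1$. Let $\alpha:[0,1]\to\mathbb{R}^{d\times d}$, $\sqrt{\Gamma}:[0,1]\to\mathbb{R}^{d\times m}$ be continuous, $\Gamma=\sqrt{\Gamma}\sqrt{\Gamma}^{T}$. Let $F(s,t)$ be the flow ($\partial_tF(s,t)=\alpha(t)F(s,t)$, $F(s,s)=I_d$), $h_u(s,t)=\int_s^t F(w,u)\Gamma(w)F(w,u)^Tdw$, $h=h_0$, $g(t)=F(0,t)$. Non-degeneracy: $F(u,v)h_u(u,v)F(u,v)^T$ is positive definite for all $0\le u<v\le1$. $\mathcal{I}=\{(0,0)\}\cup\{(n,k):n\ge1,\ 0\le k<2^{n-1}\}$. Partition: fix $\rho\in(0,1)$ and reals $l_{n,k}<m_{n,k}<r_{n,k}$ ($n\ge1$) with $l_{1,0}=0$, $r_{1,0}=1$, $l_{n+1,2k}=l_{n,k}$, $r_{n+1,2k}=l_{n+1,2k+1}=m_{n,k}$, $r_{n+1,2k+1}=r_{n,k}$, $\max(r_{n,k}-m_{n,k},m_{n,k}-l_{n,k})<\rho(r_{n,k}-l_{n,k})$. For $n\ge1$ (writing $l,m,r$ for $l_{n,k},m_{n,k},r_{n,k}$): $\Sigma_{n,k}=h_m(l,m)h_m(l,r)^{-1}h_m(m,r)$,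 $\sigma_{n,k}$ its lower-triangular Cholesky factor with positive diagonal, $L_{n,k}=h(l,m)^{-1}g(m)^{-1}\sigma_{n,k}$, $R_{n,k}=h(m,r)^{-1}g(m)^{-1}\sigma_{n,k}$, $M_{n,k}=g(m)^T(\sigma_{n,k}^{-1})^T$, and $\psi_{n,k}(t)=g(t)h(l,t)L_{n,k}$ on $[l,m]$, $g(t)h(t,r)R_{n,k}$ on $[m,r]$, $0$ elsewhere. Also $\sigma_{0,0}$ is the lower-triangular Cholesky factor of $g(1)h(0,1)g(1)^T$, $L_{0,0}=h(0,1)^{-1}g(1)^{-1}\sigma_{0,0}$, $\psi_{0,0}(t)=g(t)h(0,t)L_{0,0}$. Dual family: $\delta_{n,k}$ is the $\mathbb{R}^{d\times d}$-valued combination of Dirac masses $\delta_{n,k}(t)=(g(t)^{-1})^T\big(M_{n,k}\delta(t-m)-L_{n,k}\delta(t-l)-R_{n,k}\delta(t-r)\big)$ for $n\ge1$, and $\delta_{0,0}(t)=(g(t)^{-1})^TL_{0,0}\delta(t-1)$. Its pairing with a continuous matrix-valued function $x$ on $[0,1]$ is $\Delta_{n,k}(x)=\int\delta_{n,k}(t)^Tx(t)\,dt$, i.e. $\Delta_{n,k}(x)=M_{n,k}^Tg(m)^{-1}x(m)-L_{n,k}^Tg(l)^{-1}x(l)-R_{n,k}^Tg(r)^{-1}x(r)$ for $n\ge1$ and $\Delta_{0,0}(x)=L_{0,0}^Tg(1)^{-1}x(1)$. *)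

theory Defs
  imports "HOL-Analysis.Analysis"
begin


definition Gam :: "(real \<Rightarrow> real^'m^'d::{finite,linorder}) \<Rightarrow> real \<Rightarrow> real^'d::{finite,linorder}^'d::{finite,linorder}" where
  "Gam sG w = sG w ** transpose (sG w)"

definition hu :: "(real \<Rightarrow> real \<Rightarrow> real^'d::{finite,linorder}^'d::{finite,linorder}) \<Rightarrow> (real \<Rightarrow> real^'m^'d::{finite,linorder})
    \<Rightarrow> real \<Rightarrow> real \<Rightarrow> real \<Rightarrow> real^'d::{finite,linorder}^'d::{finite,linorder}" where
  "hu F sG u s t = integral {s..t} (\<lambda>w. F w u ** Gam sG w ** transpose (F w u))"

definition hh :: "(real \<Rightarrow> real \<Rightarrow> real^'d::{finite,linorder}^'d::{finite,linorder}) \<Rightarrow> (real \<Rightarrow> real^'m^'d::{finite,linorder})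
    \<Rightarrow> real \<Rightarrow> real \<Rightarrow> real^'d::{finite,linorder}^'d::{finite,linorder}" where
  "hh F sG s t = hu F sG 0 s t"

definition gg :: "(real \<Rightarrow> real \<Rightarrow> real^'d::{finite,linorder}^'d::{finite,linorder}) \<Rightarrow> real \<Rightarrow> real^'d::{finite,linorder}^'d::{finite,linorder}" where
  "gg F t = F 0 t"

definition pos_def_mat :: "real^'d::{finite,linorder}^'d::{finite,linorder} \<Rightarrow> bool" where
  "pos_def_mat A \<longleftrightarrow> (\<forall>x. x \<noteq> 0 \<longrightarrow> x \<bullet> (A *v x) > 0)"

definition lower_triangular :: "real^'d::{finite,linorder}^'d::{finite,linorder} \<Rightarrow> bool" where
  "lower_triangular L \<longleftrightarrow> (\<forall>i j. i < j \<longrightarrow> L $ i $ j = 0)"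

definition cholesky :: "real^'d::{finite,linorder}^'d::{finite,linorder} \<Rightarrow> real^'d::{finite,linorder}^'d::{finite,linorder}" where
  "cholesky A = (THE L. lower_triangular L \<and> (\<forall>i. L $ i $ i > 0) \<and> L ** transpose L = A)"

definition idx :: "(nat \<times> nat) set" where
  "idx = {(0,0)} \<union> {(n,k). n \<ge> 1 \<and> k < 2^(n-1)}"

text \<open>sigma_{n,k}; lp mp rp are the partition points l_{n,k}, m_{n,k}, r_{n,k}\<close>
definition sig :: "(real \<Rightarrow> real \<Rightarrow> real^'d::{finite,linorder}^'d::{finite,linorder}) \<Rightarrow> (real \<Rightarrow> real^'m^'d::{finite,linorder})
    \<Rightarrow> (nat \<Rightarrow> nat \<Rightarrow> real) \<Rightarrow> (nat \<Rightarrow> nat \<Rightarrow> real) \<Rightarrow> (nat \<Rightarrow> nat \<Rightarrow> real)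
    \<Rightarrow> nat \<Rightarrow> nat \<Rightarrow> real^'d::{finite,linorder}^'d::{finite,linorder}" where
  "sig F sG lp mp rp n k =
    (if n = 0 then cholesky (gg F 1 ** hh F sG 0 1 ** transpose (gg F 1))
     else (let l = lp n k; m = mp n k; r = rp n k in
       cholesky (hu F sG m l m ** matrix_inv (hu F sG m l r) ** hu F sG m m r)))"

definition Lm :: "(real \<Rightarrow> real \<Rightarrow> real^'d::{finite,linorder}^'d::{finite,linorder}) \<Rightarrow> (real \<Rightarrow> real^'m^'d::{finite,linorder})
    \<Rightarrow> (nat \<Rightarrow> nat \<Rightarrow> real) \<Rightarrow> (nat \<Rightarrow> nat \<Rightarrow> real) \<Rightarrow> (nat \<Rightarrow> nat \<Rightarrow> real)
    \<Rightarrow> nat \<Rightarrow> nat \<Rightarrow> real^'d::{finite,linorder}^'d::{finite,linorder}" where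
  "Lm F sG lp mp rp n k =
    (if n = 0 then matrix_inv (hh F sG 0 1) ** matrix_inv (gg F 1) ** sig F sG lp mp rp 0 0
     else matrix_inv (hh F sG (lp n k) (mp n k)) ** matrix_inv (gg F (mp n k))
            ** sig F sG lp mp rp n k)"

definition Rm :: "(real \<Rightarrow> real \<Rightarrow> real^'d::{finite,linorder}^'d::{finite,linorder}) \<Rightarrow> (real \<Rightarrow> real^'m^'d::{finite,linorder})
    \<Rightarrow> (nat \<Rightarrow> nat \<Rightarrow> real) \<Rightarrow> (nat \<Rightarrow> nat \<Rightarrow> real) \<Rightarrow> (nat \<Rightarrow> nat \<Rightarrow> real)
    \<Rightarrow> nat \<Rightarrow> nat \<Rightarrow> real^'d::{finite,linorder}^'d::{finite,linorder}" where
  "Rm F sG lp mp rp n k =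
     matrix_inv (hh F sG (mp n k) (rp n k)) ** matrix_inv (gg F (mp n k)) ** sig F sG lp mp rp n k"

definition Mm :: "(real \<Rightarrow> real \<Rightarrow> real^'d::{finite,linorder}^'d::{finite,linorder}) \<Rightarrow> (real \<Rightarrow> real^'m^'d::{finite,linorder})
    \<Rightarrow> (nat \<Rightarrow> nat \<Rightarrow> real) \<Rightarrow> (nat \<Rightarrow> nat \<Rightarrow> real) \<Rightarrow> (nat \<Rightarrow> nat \<Rightarrow> real)
    \<Rightarrow> nat \<Rightarrow> nat \<Rightarrow> real^'d::{finite,linorder}^'d::{finite,linorder}" where
  "Mm F sG lp mp rp n k =
     transpose (gg F (mp n k)) ** transpose (matrix_inv (sig F sG lp mp rp n k))"

definition psi :: "(real \<Rightarrow> real \<Rightarrow> real^'d::{finite,linorder}^'d::{finite,linorder}) \<Rightarrow> (real \<Rightarrow> real^'m^'d::{finite,linorder})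
    \<Rightarrow> (nat \<Rightarrow> nat \<Rightarrow> real) \<Rightarrow> (nat \<Rightarrow> nat \<Rightarrow> real) \<Rightarrow> (nat \<Rightarrow> nat \<Rightarrow> real)
    \<Rightarrow> nat \<Rightarrow> nat \<Rightarrow> real \<Rightarrow> real^'d::{finite,linorder}^'d::{finite,linorder}" where
  "psi F sG lp mp rp n k t =
    (if n = 0 then gg F t ** hh F sG 0 t ** Lm F sG lp mp rp 0 0
     else if lp n k \<le> t \<and> t \<le> mp n k then
       gg F t ** hh F sG (lp n k) t ** Lm F sG lp mp rp n k
     else if mp n k \<le> t \<and> t \<le> rp n k then
       gg F t ** hh F sG t (rp n k) ** Rm F sG lp mp rp n k
     else 0)"

definition Delta :: "(real \<Rightarrow> real \<Rightarrow> real^'d::{finite,linorder}^'d::{finite,linorder}) \<Rightarrow> (real \<Rightarrow> real^'m^'d::{finite,linorder})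
    \<Rightarrow> (nat \<Rightarrow> nat \<Rightarrow> real) \<Rightarrow> (nat \<Rightarrow> nat \<Rightarrow> real) \<Rightarrow> (nat \<Rightarrow> nat \<Rightarrow> real)
    \<Rightarrow> nat \<Rightarrow> nat \<Rightarrow> (real \<Rightarrow> real^'d::{finite,linorder}^'d::{finite,linorder}) \<Rightarrow> real^'d::{finite,linorder}^'d::{finite,linorder}" where
  "Delta F sG lp mp rp p q x =
    (if p = 0 then transpose (Lm F sG lp mp rp 0 0) ** matrix_inv (gg F 1) ** x 1
     else (let l = lp p q; m = mp p q; r = rp p q in
       transpose (Mm F sG lp mp rp p q) ** matrix_inv (gg F m) ** x m
       - transpose (Lm F sG lp mp rp p q) ** matrix_inv (gg F l) ** x l
       - transpose (Rm F sG lp mp rp p q) ** matrix_inv (gg F r) ** x r))"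

end

theory Submission
  imports Defs
begin

text \<open>
  Write psi(n,k)(t) = g(t) X(t). On each half of the support of psi(n,k), X is affine in
  t \<mapsto> h(0,t), because h is additive over intervals; off the support X vanishes.
  The flow property gives h_u(s,t) = g(u) h(s,t) g(u)^T, so Sigma(p,q) is the congruence by g(m)
  of the parallel sum A (A + B)^-1 B = (A^-1 + B^-1)^-1 of A = h(l,m) and B = h(m,r), and the
  pairing Delta(p,q)(g X) factors as sigma^T g(m)^-T times the second difference
  (A^-1 + B^-1) X(m) - A^-1 X(l) - B^-1 X(r), which vanishes whenever X is h-affine at l, m, r.
  Dyadic cells are either nested or have disjoint interiors, so every cell other than (n,k) sees
  psi(n,k) as h-affine at its three points. On its own cell X(l) = X(r) = 0 and X(m) = g(m)^-1 sigma,
  and the pairing is sigma^T (g Sigma g^T)^-1 sigma = 1 because sigma sigma^T = g Sigma g^T.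
  The root pair (0,0) is the same computation at t = 1, where every psi(n,k) with n \<ge> 1 vanishes.
\<close>

section \<open>Matrix algebra\<close>

lemma matrix_add_rdistrib: "((A::'a::semiring_1^'n::finite^'m) + B) ** C = A ** C + B ** C"
  by (vector matrix_matrix_mult_def sum.distrib[symmetric] field_simps)

lemma matrix_diff_ldistrib: "(A::'a::ring_1^'n::finite^'m) ** (B - C) = A ** B - A ** C"
  by (vector matrix_matrix_mult_def sum_subtractf[symmetric] field_simps)

lemma matrix_diff_rdistrib: "((A::'a::ring_1^'n::finite^'m) - B) ** C = A ** C - B ** C"
  by (vector matrix_matrix_mult_def sum_subtractf[symmetric] field_simps)

lemma matrix_neg_rdistrib: "(A::'a::ring_1^'n::finite^'m) ** (- B) = - (A ** B)"
  by (vector matrix_matrix_mult_def sum_negf[symmetric])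

lemma bounded_bilinear_matrix_mult:
  "bounded_bilinear (\<lambda>(A::real^'n::finite^'n) (B::real^'n^'n). A ** B)"
proof -
  have "bilinear (\<lambda>(A::real^'n^'n) (B::real^'n^'n). A ** B)"
    unfolding bilinear_def
    by (auto intro!: linearI simp: matrix_add_ldistrib matrix_add_rdistrib)
      (vector matrix_matrix_mult_def sum_distrib_left algebra_simps)+
  then show ?thesis
    using bilinear_conv_bounded_bilinear by blast
qed

lemma bounded_linear_sandwich:
  "bounded_linear (\<lambda>X::real^'n::finite^'n. (A::real^'n^'n) ** X ** (B::real^'n^'n))"
  using bounded_linear_compose[OF
      bounded_bilinear.bounded_linear_left[OF bounded_bilinear_matrix_mult, of B]
      bounded_bilinear.bounded_linear_right[OF bounded_bilinear_matrix_mult, of A]]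
  by (simp add: o_def)

lemma transpose_add: "transpose ((A::'a::semiring_1^'n::finite^'m) + B) = transpose A + transpose B"
  by (simp add: transpose_def vec_eq_iff)

lemma inner_matrix_vector_transpose:
  "(v::real^'n::finite) \<bullet> ((M::real^'n^'n) *v w) = (transpose M *v v) \<bullet> w"
  by (metis dot_lmul_matrix transpose_matrix_vector)

lemma bounded_linear_transpose: "bounded_linear (transpose :: real^'n::finite^'n \<Rightarrow> _)"
  using linear_conv_bounded_linear
  by (metis (mono_tags) linearI transpose_add transpose_scalar)

lemma matrix_inv_left: "invertible (A::'a::field^'n::finite^'n) \<Longrightarrow> matrix_inv A ** A = mat 1"
  unfolding matrix_inv_def invertible_def by (rule someI2_ex) auto

lemma matrix_inv_right: "invertible (A::'a::field^'n::finite^'n) \<Longrightarrow> A ** matrix_inv A = mat 1"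
  unfolding matrix_inv_def invertible_def by (rule someI2_ex) auto

lemma matrix_inv_cancel_left: "invertible (A::'a::field^'n::finite^'n) \<Longrightarrow> X ** matrix_inv A ** A = X"
  by (simp add: matrix_inv_left flip: matrix_mul_assoc)

lemma matrix_inv_cancel_right: "invertible (A::'a::field^'n::finite^'n) \<Longrightarrow> X ** A ** matrix_inv A = X"
  by (simp add: matrix_inv_right flip: matrix_mul_assoc)

lemma matrix_inv_unique:
  fixes A B :: "'a::field^'n::finite^'n"
  assumes AB: "A ** B = mat 1"
  shows "matrix_inv A = B"
proof -
  have "invertible A"
    using AB invertible_right_inverse by blast
  have "matrix_inv A = matrix_inv A ** (A ** B)"
    by (simp add: AB)
  also have "\<dots> = B"
    by (simp add: matrix_mul_assoc matrix_inv_left \<open>invertible A\<close>)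
  finally show ?thesis .
qed

lemma invertible_matrix_inv: "invertible (A::'a::field^'n::finite^'n) \<Longrightarrow> invertible (matrix_inv A)"
  using matrix_inv_left invertible_right_inverse by blast

lemma matrix_inv_mult:
  fixes A B :: "'a::field^'n::finite^'n"
  assumes "invertible A" "invertible B"
  shows "matrix_inv (A ** B) = matrix_inv B ** matrix_inv A"
  by (rule matrix_inv_unique) (simp add: matrix_mul_assoc matrix_inv_cancel_right matrix_inv_right assms)

lemma matrix_inv_transpose:
  "invertible (A::real^'n::finite^'n) \<Longrightarrow> matrix_inv (transpose A) = transpose (matrix_inv A)"
  by (rule matrix_inv_unique) (simp add: matrix_inv_left flip: matrix_transpose_mul)

lemma symmetric_matrix_inv:
  "transpose (A::real^'n::finite^'n) = A \<Longrightarrow> invertible A \<Longrightarrow> transpose (matrix_inv A) = matrix_inv A"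
  by (metis matrix_inv_transpose)

lemma pos_def_mat_invertible:
  fixes A :: "real^'d::{finite,linorder}^'d::{finite,linorder}"
  assumes "pos_def_mat A"
  shows "invertible A"
proof -
  have "A *v x = 0 \<Longrightarrow> x = 0" for x
    using assms unfolding pos_def_mat_def by force
  then show ?thesis
    using matrix_left_invertible_ker invertible_left_inverse by blast
qed

lemma not_pos_def_mat_0: "\<not> pos_def_mat (0 :: real^'d::{finite,linorder}^'d::{finite,linorder})"
  unfolding pos_def_mat_def
  by (metis axis_nth inner_zero_right less_irrefl matrix_vector_mult_0 zero_neq_one vec_eq_iff zero_index)

lemma pos_def_mat_add:
  fixes A B :: "real^'d::{finite,linorder}^'d::{finite,linorder}"
  assumes "pos_def_mat A" "pos_def_mat B"
  shows "pos_def_mat (A + B)"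
  using assms unfolding pos_def_mat_def
  by (simp add: matrix_vector_mult_add_rdistrib inner_add_right add_pos_pos)

lemma pos_def_mat_congruence:
  fixes G A :: "real^'d::{finite,linorder}^'d::{finite,linorder}"
  assumes G: "invertible G" and A: "pos_def_mat A"
  shows "pos_def_mat (G ** A ** transpose G)"
  unfolding pos_def_mat_def
proof (intro allI impI)
  fix x :: "real^'d::{finite,linorder}" assume "x \<noteq> 0"
  then have "transpose G *v x \<noteq> 0"
    using inj_matrix_vector_mult[OF transpose_invertible[OF G]]
    by (metis inj_eq matrix_vector_mult_0_right)
  then have "(transpose G *v x) \<bullet> (A *v (transpose G *v x)) > 0"
    using A unfolding pos_def_mat_def by blast
  then show "x \<bullet> ((G ** A ** transpose G) *v x) > 0"
    by (metis dot_lmul_matrix transpose_matrix_vector matrix_vector_mul_assoc)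
qed

lemma pos_def_mat_congruence_iff:
  fixes G A :: "real^'d::{finite,linorder}^'d::{finite,linorder}"
  assumes G: "invertible G"
  shows "pos_def_mat (G ** A ** transpose G) \<longleftrightarrow> pos_def_mat A"
proof
  assume "pos_def_mat (G ** A ** transpose G)"
  moreover have "A = matrix_inv G ** (G ** A ** transpose G) ** transpose (matrix_inv G)"
    using G transpose_invertible[OF G]
    by (simp add: matrix_mul_assoc matrix_inv_left matrix_inv_cancel_right flip: matrix_inv_transpose)
  ultimately show "pos_def_mat A"
    by (metis pos_def_mat_congruence invertible_matrix_inv G)
qed (rule pos_def_mat_congruence[OF G])

lemma pos_def_mat_matrix_inv:
  fixes A :: "real^'d::{finite,linorder}^'d::{finite,linorder}"
  assumes A: "pos_def_mat A"
  shows "pos_def_mat (matrix_inv A)"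
  unfolding pos_def_mat_def
proof (intro allI impI)
  fix x :: "real^'d::{finite,linorder}" assume "x \<noteq> 0"
  define y where "y = matrix_inv A *v x"
  have Ay: "A *v y = x"
    using pos_def_mat_invertible[OF A]
    by (simp add: y_def matrix_vector_mul_assoc matrix_inv_right)
  then have "y \<noteq> 0"
    using \<open>x \<noteq> 0\<close> by auto
  then have "y \<bullet> (A *v y) > 0"
    using A unfolding pos_def_mat_def by blast
  then show "x \<bullet> (matrix_inv A *v x) > 0"
    using Ay by (simp add: y_def[symmetric] inner_commute)
qed

definition parallel_sum :: "real^'n::finite^'n \<Rightarrow> real^'n^'n \<Rightarrow> real^'n^'n" where
  "parallel_sum A B = A ** matrix_inv (A + B) ** B"

lemma parallel_sum_inverse:
  fixes A B :: "real^'d::{finite,linorder}^'d::{finite,linorder}"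
  assumes A: "pos_def_mat A" and B: "pos_def_mat B"
  shows "parallel_sum A B ** (matrix_inv A + matrix_inv B) = mat 1"
proof -
  have iA: "invertible A" and iB: "invertible B" and iAB: "invertible (A + B)"
    using A B pos_def_mat_add pos_def_mat_invertible by blast+
  have "B ** matrix_inv A + mat 1 = (A + B) ** matrix_inv A"
    by (simp add: matrix_add_rdistrib matrix_inv_right iA add.commute)
  moreover have "parallel_sum A B ** (matrix_inv A + matrix_inv B)
      = A ** (matrix_inv (A + B) ** (B ** matrix_inv A + mat 1))"
    by (simp add: parallel_sum_def matrix_mul_assoc[symmetric] matrix_add_ldistrib matrix_inv_right iB)
  ultimately have "parallel_sum A B ** (matrix_inv A + matrix_inv B)
      = A ** (matrix_inv (A + B) ** ((A + B) ** matrix_inv A))"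
    by simp
  also have "\<dots> = mat 1"
    using iA iAB by (simp add: matrix_mul_assoc matrix_inv_left matrix_inv_right)
  finally show ?thesis .
qed

lemma parallel_sum_eq_matrix_inv:
  fixes A B :: "real^'d::{finite,linorder}^'d::{finite,linorder}"
  assumes "pos_def_mat A" "pos_def_mat B"
  shows "parallel_sum A B = matrix_inv (matrix_inv A + matrix_inv B)"
  using parallel_sum_inverse[OF assms] matrix_left_right_inverse matrix_inv_unique by metis

lemma pos_def_parallel_sum:
  fixes A B :: "real^'d::{finite,linorder}^'d::{finite,linorder}"
  assumes "pos_def_mat A" "pos_def_mat B"
  shows "pos_def_mat (parallel_sum A B)"
  using assms by (simp add: parallel_sum_eq_matrix_inv pos_def_mat_matrix_inv pos_def_mat_add)

lemma symmetric_parallel_sum: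
  fixes A B :: "real^'d::{finite,linorder}^'d::{finite,linorder}"
  assumes "pos_def_mat A" "pos_def_mat B" "transpose A = A" "transpose B = B"
  shows "transpose (parallel_sum A B) = parallel_sum A B"
  using assms
  by (simp add: parallel_sum_eq_matrix_inv symmetric_matrix_inv transpose_add pos_def_mat_invertible
      pos_def_mat_matrix_inv pos_def_mat_add)

lemma cholesky_normalises_congruence:
  fixes G H \<sigma> :: "real^'d::{finite,linorder}^'d::{finite,linorder}"
  assumes G: "invertible G" and H: "invertible H"
    and \<sigma>: "\<sigma> ** transpose \<sigma> = G ** H ** transpose G"
  shows "transpose \<sigma> ** transpose (matrix_inv G) ** matrix_inv H ** matrix_inv G ** \<sigma> = mat 1"
proof -
  have GT: "invertible (transpose G)"
    using transpose_invertible[OF G] .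
  have "invertible (\<sigma> ** transpose \<sigma>)"
    unfolding \<sigma> by (intro invertible_mult G H GT)
  then have \<sigma>_inv: "invertible \<sigma>"
    using invertible_right_inverse by (metis matrix_mul_assoc)
  then have \<sigma>T: "invertible (transpose \<sigma>)"
    by (rule transpose_invertible)
  have "transpose (matrix_inv G) ** matrix_inv H ** matrix_inv G = matrix_inv (\<sigma> ** transpose \<sigma>)"
    unfolding \<sigma> using G H GT
    by (simp add: matrix_inv_mult invertible_mult matrix_inv_transpose matrix_mul_assoc)
  also have "\<dots> = matrix_inv (transpose \<sigma>) ** matrix_inv \<sigma>"
    using matrix_inv_mult[OF \<sigma>_inv \<sigma>T] .
  finally have "transpose \<sigma> ** (transpose (matrix_inv G) ** matrix_inv H ** matrix_inv G) ** \<sigma>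
      = transpose \<sigma> ** (matrix_inv (transpose \<sigma>) ** matrix_inv \<sigma>) ** \<sigma>"
    by simp
  then show ?thesis
    using \<sigma>_inv \<sigma>T by (simp add: matrix_mul_assoc matrix_inv_right matrix_inv_left)
qed

lemma congruence_mult_matrix_inv:
  fixes G A B C :: "real^'d::{finite,linorder}^'d::{finite,linorder}"
  assumes G: "invertible G" and C: "invertible C"
  shows "(G ** A ** transpose G) ** matrix_inv (G ** C ** transpose G) ** (G ** B ** transpose G)
    = G ** (A ** matrix_inv C ** B) ** transpose G"
proof -
  have GT: "invertible (transpose G)"
    using transpose_invertible[OF G] .
  have "matrix_inv (G ** C ** transpose G) = matrix_inv (transpose G) ** matrix_inv C ** matrix_inv G"
    using G C GT by (simp add: matrix_inv_mult invertible_mult matrix_mul_assoc)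
  then show ?thesis
    using G GT by (simp add: matrix_mul_assoc matrix_inv_cancel_right matrix_inv_cancel_left)
qed

text \<open>The left-hand side is \<open>Delta p q x\<close> for \<open>G = g(m)\<close>, \<open>A = h(l,m)\<close>, \<open>B = h(m,r)\<close> and
  \<open>Xt = g(t)^-1 x(t)\<close> at \<open>t = l, m, r\<close>.\<close>

lemma three_point_pairing:
  fixes G A B \<sigma> Xl Xm Xr :: "real^'d::{finite,linorder}^'d::{finite,linorder}"
  assumes G: "invertible G" and A: "pos_def_mat A" "transpose A = A"
    and B: "pos_def_mat B" "transpose B = B"
    and \<sigma>: "\<sigma> ** transpose \<sigma> = G ** parallel_sum A B ** transpose G"
  defines "Q \<equiv> matrix_inv A + matrix_inv B"
  shows "transpose (transpose G ** transpose (matrix_inv \<sigma>)) ** Xm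
      - transpose (matrix_inv A ** matrix_inv G ** \<sigma>) ** Xl
      - transpose (matrix_inv B ** matrix_inv G ** \<sigma>) ** Xr
    = transpose \<sigma> ** transpose (matrix_inv G) ** (Q ** Xm - matrix_inv A ** Xl - matrix_inv B ** Xr)"
proof -
  let ?S = "parallel_sum A B"
  have SQ: "?S ** Q = mat 1"
    unfolding Q_def by (rule parallel_sum_inverse[OF A(1) B(1)])
  have GT: "invertible (transpose G)"
    using transpose_invertible[OF G] .
  have "invertible (\<sigma> ** transpose \<sigma>)"
    unfolding \<sigma> using SQ invertible_right_inverse by (metis invertible_mult G GT)
  then have \<sigma>_inv: "invertible \<sigma>"
    using invertible_right_inverse by (metis matrix_mul_assoc)
  have "transpose \<sigma> ** transpose (matrix_inv G) ** Q
      = matrix_inv \<sigma> ** (\<sigma> ** transpose \<sigma>) ** transpose (matrix_inv G) ** Q"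
    using \<sigma>_inv by (simp add: matrix_mul_assoc matrix_inv_left)
  also have "\<dots> = matrix_inv \<sigma> ** G ** (?S ** Q)"
    using G GT
    by (simp add: \<sigma> matrix_mul_assoc matrix_inv_cancel_right flip: matrix_inv_transpose)
  finally have M: "transpose \<sigma> ** transpose (matrix_inv G) ** Q = matrix_inv \<sigma> ** G"
    by (simp add: SQ)
  have "transpose (matrix_inv C ** matrix_inv G ** \<sigma>) = transpose \<sigma> ** transpose (matrix_inv G) ** matrix_inv C"
    if "pos_def_mat C" "transpose C = C" for C
    using symmetric_matrix_inv[OF that(2) pos_def_mat_invertible[OF that(1)]]
    by (simp add: matrix_transpose_mul matrix_mul_assoc)
  then show ?thesis
    using A B
    by (simp add: matrix_transpose_mul matrix_diff_ldistrib matrix_mul_assoc flip: M)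
qed

section \<open>Cholesky factorisation\<close>

lemma finite_linorder_less_induct:
  fixes c :: "'a::{finite,linorder}"
  assumes "\<And>c. (\<And>c'. c' < c \<Longrightarrow> P c') \<Longrightarrow> P c"
  shows "P c"
proof (induction c rule: measure_induct_rule[of "\<lambda>c. card {i::'a. i < c}"])
  case (less c)
  show ?case
  proof (rule assms)
    fix c' assume "c' < c"
    then have "{i. i < c'} \<subset> {i. i < c}" by auto
    then have "card {i. i < c'} < card {i. i < c}" by (intro psubset_card_mono) auto
    then show "P c'" using less by blast
  qed
qed

lemma lower_triangular_mult_vector:
  fixes M :: "real^'d::{finite,linorder}^'d::{finite,linorder}"
  assumes "lower_triangular M"
  shows "(M *v y) $ c = (\<Sum>k | k < c. M$c$k * y$k) + M$c$c * y$c"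
proof -
  have U: "(UNIV::'d set) = {k. k < c} \<union> {c} \<union> {k. c < k}" by auto
  have "(M *v y) $ c = (\<Sum>k\<in>UNIV. M$c$k * y$k)"
    by (simp add: matrix_vector_mult_def)
  also have "\<dots> = (\<Sum>k | k < c. M$c$k * y$k) + M$c$c * y$c + (\<Sum>k | c < k. M$c$k * y$k)"
    unfolding U by (subst sum.union_disjoint; auto)+
  also have "(\<Sum>k | c < k. M$c$k * y$k) = 0"
    using assms unfolding lower_triangular_def by (intro sum.neutral) auto
  finally show ?thesis by simp
qed

lemma lower_triangular_invertible:
  fixes L :: "real^'d::{finite,linorder}^'d::{finite,linorder}"
  assumes tri: "lower_triangular L" and diag: "\<And>i. L$i$i \<noteq> 0"
  shows "invertible L"
proof -
  have "y = 0" if Ly: "L *v y = 0" for y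
  proof -
    have "y $ c = 0" for c
    proof (induction c rule: finite_linorder_less_induct)
      case (1 c)
      then have "(\<Sum>k | k < c. L$c$k * y$k) = 0" by simp
      then show ?case
        using lower_triangular_mult_vector[OF tri, of y c] Ly diag[of c] by simp
    qed
    then show ?thesis by (simp add: vec_eq_iff)
  qed
  then show ?thesis
    using matrix_left_invertible_ker invertible_left_inverse by blast
qed

lemma row_inner_eq_mult_vector: "(L::real^'n::finite^'m::finite) $ i \<bullet> v = (L *v v) $ i"
  by (simp add: matrix_vector_mult_def inner_vec_def mult.commute)

lemma mult_transpose_entry: "((L::real^'n::finite^'m::finite) ** transpose L) $ i $ k = L $ i \<bullet> L $ k"
  by (simp add: matrix_matrix_mult_def transpose_def inner_vec_def)

lemma cholesky_factor_unique:
  fixes L M :: "real^'d::{finite,linorder}^'d::{finite,linorder}"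
  assumes triL: "lower_triangular L" and triM: "lower_triangular M"
    and diagL: "\<And>i. L$i$i > 0" and diagM: "\<And>i. M$i$i > 0"
    and eq: "L ** transpose L = M ** transpose M"
  shows "L = M"
proof -
  have "\<forall>i. L$i$c = M$i$c" for c
  proof (induction c rule: finite_linorder_less_induct)
    case (1 c)
    have gram: "L $ i \<bullet> L $ c = M $ i \<bullet> M $ c" for i
      using arg_cong[OF eq, of "\<lambda>X. X $ i $ c"] by (simp add: mult_transpose_entry)
    have col: "L$i$c * L$c$c = M$i$c * M$c$c" for i
      using gram[of i] 1 lower_triangular_mult_vector[OF triL, of "L$i" c]
        lower_triangular_mult_vector[OF triM, of "M$i" c]
      by (simp add: row_inner_eq_mult_vector inner_commute mult.commute)
    have "L$c$c = M$c$c"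
      using col[of c] diagL[of c] diagM[of c]
      by (metis less_le power2_eq_imp_eq power2_eq_square)
    then show ?case
      using col diagM[of c] by simp
  qed
  then show ?thesis by (simp add: vec_eq_iff)
qed

text \<open>Rows outside \<open>S\<close> are unit vectors, so that \<open>L\<close> stays invertible throughout the row-by-row
  construction.\<close>

definition partial_cholesky :: "'d::{finite,linorder} set \<Rightarrow> real^'d::{finite,linorder}^'d::{finite,linorder} \<Rightarrow> real^'d::{finite,linorder}^'d::{finite,linorder} \<Rightarrow> bool" where
  "partial_cholesky S A L \<longleftrightarrow> lower_triangular L \<and> (\<forall>i. L$i$i > 0) \<and> (\<forall>i. i \<notin> S \<longrightarrow> L $ i = axis i 1)
     \<and> (\<forall>i\<in>S. \<forall>k\<in>S. L $ i \<bullet> L $ k = A $ i $ k)"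

lemma partial_cholesky_prefixD:
  assumes "partial_cholesky {i. i < j} A L"
  shows "lower_triangular L" "invertible L" "j \<le> i \<Longrightarrow> L $ i = axis i 1"
    "i < j \<Longrightarrow> k < j \<Longrightarrow> L $ i \<bullet> L $ k = A $ i $ k"
proof -
  show "lower_triangular L"
    using assms by (simp add: partial_cholesky_def)
  moreover have "L $ i $ i \<noteq> 0" for i
    using assms unfolding partial_cholesky_def by (metis less_irrefl)
  ultimately show "invertible L"
    by (rule lower_triangular_invertible)
  show "j \<le> i \<Longrightarrow> L $ i = axis i 1" "i < j \<Longrightarrow> k < j \<Longrightarrow> L $ i \<bullet> L $ k = A $ i $ k"
    using assms by (auto simp: partial_cholesky_def not_less)
qed

lemma partial_cholesky_column_solution:
  assumes L: "partial_cholesky {i. i < j} A L"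
  obtains x where "\<And>i. j \<le> i \<Longrightarrow> x $ i = 0" "\<And>i. i < j \<Longrightarrow> L $ i \<bullet> x = A $ i $ j"
proof -
  define a where "a = (\<chi> i. if i < j then A$i$j else 0)"
  define x where "x = matrix_inv L *v a"
  have x: "L $ i \<bullet> x = a $ i" for i
    using partial_cholesky_prefixD(2)[OF L]
    by (simp add: row_inner_eq_mult_vector x_def matrix_vector_mul_assoc matrix_inv_right)
  show ?thesis
  proof (rule that)
    show "x $ i = 0" if "j \<le> i" for i
      using x[of i] partial_cholesky_prefixD(3)[OF L that] that by (simp add: a_def inner_axis')
    show "L $ i \<bullet> x = A $ i $ j" if "i < j" for i
      using x[of i] that by (simp add: a_def)
  qed
qed

lemma partial_cholesky_transpose_solution:
  assumes L: "partial_cholesky {i. i < j} A L" and x: "\<And>i. j \<le> i \<Longrightarrow> x $ i = 0"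
  obtains w where "\<And>i. j \<le> i \<Longrightarrow> w $ i = 0" "transpose L *v w = x"
proof -
  define w where "w = matrix_inv (transpose L) *v x"
  have LTw: "transpose L *v w = x"
    using transpose_invertible[OF partial_cholesky_prefixD(2)[OF L]]
    by (simp add: w_def matrix_vector_mul_assoc matrix_inv_right)
  have "transpose L $ i = axis i 1" if "j \<le> i" for i
  proof -
    have "L $ k $ i = (if k = i then 1 else 0)" for k
      using partial_cholesky_prefixD(1,3)[OF L] that unfolding lower_triangular_def
      by (cases k i rule: linorder_cases) (auto simp: axis_def)
    then show ?thesis
      by (simp add: vec_eq_iff transpose_def axis_def)
  qed
  then have "w $ i = 0" if "j \<le> i" for i
    using LTw x[OF that] that row_inner_eq_mult_vector[of "transpose L" i w] by (simp add: inner_axis')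
  with LTw show ?thesis
    using that by blast
qed

text \<open>The Schur complement \<open>A_jj - x \<bullet> x\<close> is the value of the quadratic form of \<open>A\<close> at
  \<open>e_j - w\<close>, where \<open>transpose L *v w = x\<close>.\<close>

lemma partial_cholesky_row_norm_less:
  fixes A L :: "real^'d::{finite,linorder}^'d::{finite,linorder}"
  assumes symA: "transpose A = A" and pdA: "pos_def_mat A"
    and L: "partial_cholesky {i. i < j} A L"
    and x_supp: "\<And>i. j \<le> i \<Longrightarrow> x $ i = 0" and x_rows: "\<And>i. i < j \<Longrightarrow> L $ i \<bullet> x = A $ i $ j"
  shows "x \<bullet> x < A $ j $ j"
proof -
  obtain w where w_supp: "\<And>i. j \<le> i \<Longrightarrow> w $ i = 0" and LTw: "transpose L *v w = x"
    using partial_cholesky_transpose_solution[OF L x_supp] by blast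
  have w_inner: "w \<bullet> y = w \<bullet> z" if "\<And>i. i < j \<Longrightarrow> y $ i = z $ i" for y z
    unfolding inner_vec_def using w_supp that by (intro sum.cong refl) (metis inner_zero_left not_less)
  have Ae: "(A *v axis j 1) $ i = A $ i $ j" for i
    by (simp add: inner_axis flip: row_inner_eq_mult_vector)
  have wAe: "w \<bullet> (A *v axis j 1) = x \<bullet> x"
  proof -
    have "w \<bullet> (A *v axis j 1) = w \<bullet> (L *v x)"
      by (rule w_inner) (simp add: x_rows inner_axis flip: row_inner_eq_mult_vector)
    also have "\<dots> = x \<bullet> x"
      by (subst inner_matrix_vector_transpose) (simp only: LTw)
    finally show ?thesis .
  qed
  have wAw: "w \<bullet> (A *v w) = x \<bullet> x"
  proof -
    have "(A *v w) $ i = ((L ** transpose L) *v w) $ i" if "i < j" for i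
      unfolding matrix_vector_mult_def vec_lambda_beta mult_transpose_entry
      using that partial_cholesky_prefixD(4)[OF L] w_supp
      by (intro sum.cong refl) (metis mult_zero_right not_less)
    then have "w \<bullet> (A *v w) = w \<bullet> ((L ** transpose L) *v w)"
      by (rule w_inner)
    also have "\<dots> = x \<bullet> x"
      by (subst matrix_vector_mul_assoc[symmetric], subst inner_matrix_vector_transpose) (simp only: LTw)
    finally show ?thesis .
  qed
  define u where "u = axis j 1 - w"
  have "u $ j = 1"
    using w_supp by (simp add: u_def)
  then have "u \<bullet> (A *v u) > 0"
    using pdA unfolding pos_def_mat_def by (metis zero_index zero_neq_one)
  moreover have "axis j 1 \<bullet> (A *v w) = w \<bullet> (A *v axis j 1)"
    by (metis inner_matrix_vector_transpose inner_commute symA)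
  ultimately show ?thesis
    using wAe wAw Ae[of j]
    by (simp add: u_def matrix_vector_mult_diff_distrib inner_diff_left inner_diff_right inner_axis')
qed

lemma partial_cholesky_add_row:
  fixes A L :: "real^'d::{finite,linorder}^'d::{finite,linorder}"
  assumes symA: "transpose A = A" and L: "partial_cholesky {i. i < j} A L"
    and r_tri: "\<And>k. j < k \<Longrightarrow> r $ k = 0" and r_diag: "r $ j > 0"
    and r_rows: "\<And>i. i < j \<Longrightarrow> L $ i \<bullet> r = A $ i $ j" and r_norm: "r \<bullet> r = A $ j $ j"
  shows "partial_cholesky {i. i \<le> j} A (\<chi> i. if i = j then r else L $ i)"
  unfolding partial_cholesky_def
proof (intro conjI allI impI ballI)
  let ?L = "\<chi> i. if i = j then r else L $ i"
  have rows: "?L $ i = (if i = j then r else L $ i)" for i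
    by simp
  show "lower_triangular ?L"
    using L r_tri unfolding lower_triangular_def partial_cholesky_def by auto
  show "?L $ i $ i > 0" for i
    using L r_diag unfolding partial_cholesky_def by simp
  show "?L $ i = axis i 1" if "i \<notin> {i. i \<le> j}" for i
    using that partial_cholesky_prefixD(3)[OF L] by auto
next
  have symm: "A $ k $ i = A $ i $ k" for i k
    using arg_cong[OF symA, of "\<lambda>M. M $ i $ k"] by (simp add: transpose_def)
  fix i k assume "i \<in> {i. i \<le> j}" "k \<in> {i. i \<le> j}"
  then consider "i < j" "k < j" | "i < j" "k = j" | "i = j" "k < j" | "i = j" "k = j"
    by fastforce
  then show "(\<chi> i. if i = j then r else L $ i) $ i \<bullet> (\<chi> i. if i = j then r else L $ i) $ k = A $ i $ k"
  proof cases
    case 1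
    then show ?thesis
      using partial_cholesky_prefixD(4)[OF L] by (simp add: less_imp_neq)
  next
    case 2
    then show ?thesis
      using r_rows by (simp add: less_imp_neq)
  next
    case 3
    then show ?thesis
      using r_rows[of k] symm[of j k] by (simp add: less_imp_neq inner_commute)
  next
    case 4
    then show ?thesis
      using r_norm by simp
  qed
qed

lemma partial_cholesky_extend:
  fixes A L :: "real^'d::{finite,linorder}^'d::{finite,linorder}"
  assumes symA: "transpose A = A" and pdA: "pos_def_mat A"
    and L: "partial_cholesky {i. i < j} A L"
  shows "\<exists>L'. partial_cholesky {i. i \<le> j} A L'"
proof -
  obtain x where x_supp: "\<And>i. j \<le> i \<Longrightarrow> x $ i = 0"
    and x_rows: "\<And>i. i < j \<Longrightarrow> L $ i \<bullet> x = A $ i $ j"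
    using partial_cholesky_column_solution[OF L] by blast
  define t where "t = sqrt (A $ j $ j - x \<bullet> x)"
  have t: "t > 0" "t * t = A $ j $ j - x \<bullet> x"
    using partial_cholesky_row_norm_less[OF symA pdA L x_supp x_rows] by (auto simp: t_def)
  define r where "r = x + t *\<^sub>R axis j 1"
  have "partial_cholesky {i. i \<le> j} A (\<chi> i. if i = j then r else L $ i)"
  proof (rule partial_cholesky_add_row[OF symA L])
    show "r $ k = 0" if "j < k" for k
      using that x_supp[of k] by (simp add: r_def axis_def)
    show "r $ j > 0"
      using t x_supp[of j] by (simp add: r_def)
    show "L $ i \<bullet> r = A $ i $ j" if "i < j" for i
      using x_rows[OF that] partial_cholesky_prefixD(1)[OF L] that
      by (simp add: r_def inner_add_right inner_axis lower_triangular_def)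
    show "r \<bullet> r = A $ j $ j"
      using t x_supp[of j] by (simp add: r_def inner_add_left inner_add_right inner_axis inner_axis')
  qed
  then show ?thesis ..
qed

lemma cholesky_exists:
  fixes A :: "real^'d::{finite,linorder}^'d::{finite,linorder}"
  assumes symA: "transpose A = A" and pdA: "pos_def_mat A"
  shows "\<exists>L. lower_triangular L \<and> (\<forall>i. L$i$i > 0) \<and> L ** transpose L = A"
proof -
  have "(\<forall>i k. k \<in> S \<longrightarrow> i \<le> k \<longrightarrow> i \<in> S) \<longrightarrow> (\<exists>L. partial_cholesky S A L)" for S :: "'d set"
    using finite[of S]
  proof (induction S rule: finite_linorder_max_induct)
    case empty
    have "partial_cholesky {} A (mat 1)"
      by (simp add: partial_cholesky_def lower_triangular_def mat_def axis_def vec_eq_iff)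
    then show ?case by blast
  next
    case (insert b S)
    show ?case
    proof
      assume "\<forall>i k. k \<in> insert b S \<longrightarrow> i \<le> k \<longrightarrow> i \<in> insert b S"
      then have S: "S = {i. i < b}"
        using insert.hyps(2) by (auto dest: less_imp_le)
      then obtain L where "partial_cholesky {i. i < b} A L"
        using insert.IH by auto
      then obtain L' where "partial_cholesky {i. i \<le> b} A L'"
        using partial_cholesky_extend[OF symA pdA] by blast
      moreover have "{i. i \<le> b} = insert b S"
        using S by auto
      ultimately show "\<exists>L. partial_cholesky (insert b S) A L"
        by auto
    qed
  qed
  then obtain L where "partial_cholesky UNIV A L"
    by blast
  then show ?thesis
    unfolding partial_cholesky_def by (auto simp: vec_eq_iff mult_transpose_entry)
qed

lemma cholesky_mult_transpose:
  fixes A :: "real^'d::{finite,linorder}^'d::{finite,linorder}"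
  assumes "transpose A = A" "pos_def_mat A"
  shows "cholesky A ** transpose (cholesky A) = A"
proof -
  have "\<exists>!L. lower_triangular L \<and> (\<forall>i. L$i$i > 0) \<and> L ** transpose L = A"
    using cholesky_exists[OF assms] cholesky_factor_unique by metis
  then show ?thesis
    unfolding cholesky_def by (rule theI'[THEN conjunct2, THEN conjunct2])
qed

section \<open>Linear matrix differential equations\<close>

lemma nonneg_zero_iff_derivative_bounded:
  fixes f f' :: "real \<Rightarrow> real"
  assumes "a \<le> b" and cont: "continuous_on {a..b} f"
    and deriv: "\<And>x. a < x \<Longrightarrow> x < b \<Longrightarrow> (f has_real_derivative f' x) (at x)"
    and bound: "\<And>x. a < x \<Longrightarrow> x < b \<Longrightarrow> \<bar>f' x\<bar> \<le> C * f x"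
    and nonneg: "\<And>x. a \<le> x \<Longrightarrow> x \<le> b \<Longrightarrow> 0 \<le> f x"
  shows "f a = 0 \<longleftrightarrow> f b = 0"
proof
  assume "f a = 0"
  have "exp (- C * b) * f b \<le> exp (- C * a) * f a"
  proof (rule DERIV_nonpos_imp_decreasing_open[OF \<open>a \<le> b\<close>])
    fix x assume x: "a < x" "x < b"
    have "((\<lambda>x. exp (- C * x) * f x) has_real_derivative exp (- C * x) * (f' x - C * f x)) (at x)"
      by (auto intro!: derivative_eq_intros deriv x simp: algebra_simps)
    moreover have "exp (- C * x) * (f' x - C * f x) \<le> 0"
      using bound[OF x] by (intro mult_nonneg_nonpos) auto
    ultimately show "\<exists>y. ((\<lambda>x. exp (- C * x) * f x) has_real_derivative y) (at x) \<and> y \<le> 0"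
      by blast
  qed (intro continuous_intros cont)
  then show "f b = 0"
    using \<open>f a = 0\<close> nonneg[of b] \<open>a \<le> b\<close> by (simp add: mult_le_0_iff)
next
  assume "f b = 0"
  have "exp (C * a) * f a \<le> exp (C * b) * f b"
  proof (rule DERIV_nonneg_imp_increasing_open[OF \<open>a \<le> b\<close>])
    fix x assume x: "a < x" "x < b"
    have "((\<lambda>x. exp (C * x) * f x) has_real_derivative exp (C * x) * (f' x + C * f x)) (at x)"
      by (auto intro!: derivative_eq_intros deriv x simp: algebra_simps)
    moreover have "exp (C * x) * (f' x + C * f x) \<ge> 0"
      using bound[OF x] by (intro mult_nonneg_nonneg) auto
    ultimately show "\<exists>y. ((\<lambda>x. exp (C * x) * f x) has_real_derivative y) (at x) \<and> y \<ge> 0"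
      by blast
  qed (intro continuous_intros cont)
  then show "f a = 0"
    using \<open>f b = 0\<close> nonneg[of a] \<open>a \<le> b\<close> by (simp add: mult_le_0_iff)
qed

lemma has_real_derivative_inner_self:
  fixes Z :: "real \<Rightarrow> 'a::real_inner"
  assumes "(Z has_vector_derivative V) (at x)"
  shows "((\<lambda>x. Z x \<bullet> Z x) has_real_derivative 2 * (Z x \<bullet> V)) (at x)"
proof -
  have dZ: "(Z has_derivative (\<lambda>h. h *\<^sub>R V)) (at x)"
    using assms by (simp add: has_vector_derivative_def)
  show ?thesis
    unfolding has_field_derivative_def
    by (rule has_derivative_eq_rhs[OF has_derivative_inner[OF dZ dZ]]) (auto simp: inner_commute)
qed

lemma linear_matrix_ode_zero:
  fixes \<alpha> Z :: "real \<Rightarrow> real^'n::finite^'n"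
  assumes cont: "continuous_on {a..b} \<alpha>"
    and ode: "\<And>t. t \<in> {a..b} \<Longrightarrow> (Z has_vector_derivative (\<alpha> t ** Z t)) (at t within {a..b})"
    and u: "u \<in> {a..b}" and Zu: "Z u = 0" and t: "t \<in> {a..b}"
  shows "Z t = 0"
proof -
  obtain K where K: "\<And>(A::real^'n^'n) (B::real^'n^'n). norm (A ** B) \<le> norm A * norm B * K" "K > 0"
    using bounded_bilinear.pos_bounded[OF bounded_bilinear_matrix_mult] by blast
  obtain c where c: "\<And>x. x \<in> {a..b} \<Longrightarrow> norm (\<alpha> x) \<le> c"
    using compact_imp_bounded[OF compact_continuous_image[OF cont compact_Icc]]
    unfolding bounded_iff by blast
  define f where "f x = Z x \<bullet> Z x" for x
  define f' where "f' x = 2 * (Z x \<bullet> (\<alpha> x ** Z x))" for x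
  have "continuous_on {a..b} Z"
    using ode continuous_on_eq_continuous_within has_vector_derivative_continuous by blast
  then have cont_f: "continuous_on {l..r} f" if "{l..r} \<subseteq> {a..b}" for l r
    unfolding f_def by (intro continuous_intros continuous_on_subset[OF _ that])
  have deriv: "(f has_real_derivative f' x) (at x)" if "a < x" "x < b" for x
  proof -
    have "(Z has_vector_derivative (\<alpha> x ** Z x)) (at x)"
      using ode[of x] that at_within_Icc_at[OF that] by simp
    then show ?thesis
      unfolding f_def f'_def by (rule has_real_derivative_inner_self)
  qed
  have bound: "\<bar>f' x\<bar> \<le> 2 * K * c * f x" if "a < x" "x < b" for x
  proof -
    have "\<bar>Z x \<bullet> (\<alpha> x ** Z x)\<bar> \<le> norm (Z x) * (norm (\<alpha> x) * norm (Z x) * K)"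
      using Cauchy_Schwarz_ineq2 K(1) mult_left_mono norm_ge_zero order_trans by metis
    also have "\<dots> \<le> norm (Z x) * (c * norm (Z x) * K)"
      using c[of x] that K(2) by (intro mult_left_mono mult_right_mono) auto
    finally show ?thesis
      by (simp add: f_def f'_def dot_square_norm power2_eq_square algebra_simps)
  qed
  have vanish: "f l = 0 \<longleftrightarrow> f r = 0" if "l \<in> {a..b}" "r \<in> {a..b}" "l \<le> r" for l r
    using that
    by (intro nonneg_zero_iff_derivative_bounded[of l r f f' "2 * K * c"] cont_f deriv bound)
      (auto simp: f_def)
  have "f u = 0 \<longleftrightarrow> f t = 0"
    using vanish[OF u t] vanish[OF t u] by linarith
  then show ?thesis
    using Zu by (simp add: f_def)
qed

lemma flow_cocycle:
  fixes \<alpha> :: "real \<Rightarrow> real^'n::finite^'n" and F :: "real \<Rightarrow> real \<Rightarrow> real^'n^'n"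
  assumes cont: "continuous_on {a..b} \<alpha>"
    and flow: "\<And>s t. s \<in> {a..b} \<Longrightarrow> t \<in> {a..b} \<Longrightarrow>
        ((\<lambda>t. F s t) has_vector_derivative (\<alpha> t ** F s t)) (at t within {a..b})"
    and init: "\<And>s. s \<in> {a..b} \<Longrightarrow> F s s = mat 1"
    and s: "s \<in> {a..b}" and u: "u \<in> {a..b}" and t: "t \<in> {a..b}"
  shows "F s t = F u t ** F s u"
proof -
  define Z where "Z t = F s t - F u t ** F s u" for t
  have "Z t = 0"
  proof (rule linear_matrix_ode_zero[OF cont _ u _ t])
    fix x assume x: "x \<in> {a..b}"
    have "((\<lambda>t. F u t ** F s u) has_vector_derivative (\<alpha> x ** F u x) ** F s u) (at x within {a..b})"
      using bounded_linear.has_vector_derivative[OF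
          bounded_bilinear.bounded_linear_left[OF bounded_bilinear_matrix_mult] flow[OF u x]] .
    then have "(Z has_vector_derivative (\<alpha> x ** F s x - (\<alpha> x ** F u x) ** F s u)) (at x within {a..b})"
      unfolding Z_def by (intro has_vector_derivative_diff flow s x)
    then show "(Z has_vector_derivative \<alpha> x ** Z x) (at x within {a..b})"
      by (simp add: Z_def matrix_diff_ldistrib matrix_mul_assoc)
  qed (simp add: Z_def init[OF u])
  then show ?thesis
    by (simp add: Z_def)
qed

section \<open>Dyadic partitions\<close>

locale dyadic_partition =
  fixes lp mp rp :: "nat \<Rightarrow> nat \<Rightarrow> real"
  assumes root_cell: "lp 1 0 = 0" "rp 1 0 = 1"
    and cell_points: "\<And>n k. n \<ge> 1 \<Longrightarrow> k < 2^(n-1) \<Longrightarrow> lp n k < mp n k \<and> mp n k < rp n k"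
    and left_child: "\<And>n k. n \<ge> 1 \<Longrightarrow> k < 2^(n-1) \<Longrightarrow>
        lp (n+1) (2*k) = lp n k \<and> rp (n+1) (2*k) = mp n k"
    and right_child: "\<And>n k. n \<ge> 1 \<Longrightarrow> k < 2^(n-1) \<Longrightarrow>
        lp (n+1) (2*k+1) = mp n k \<and> rp (n+1) (2*k+1) = rp n k"
begin

definition is_cell :: "nat \<Rightarrow> nat \<Rightarrow> bool" where
  "is_cell n k \<longleftrightarrow> 1 \<le> n \<and> k < 2^(n-1)"

lemma is_cell_points: "is_cell n k \<Longrightarrow> lp n k < mp n k \<and> mp n k < rp n k"
  using cell_points unfolding is_cell_def by blast

lemma is_cell_parent: "is_cell (n+1) q \<Longrightarrow> 1 \<le> n \<Longrightarrow> is_cell n (q div 2)"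
  unfolding is_cell_def by (cases n) (auto simp: less_mult_imp_div_less)

lemma cell_half_of_parent:
  assumes "is_cell (n+1) q" "1 \<le> n"
  defines "c \<equiv> q div 2"
  shows "(lp (n+1) q = lp n c \<and> rp (n+1) q = mp n c) \<or> (lp (n+1) q = mp n c \<and> rp (n+1) q = rp n c)"
proof -
  have "1 \<le> n" "c < 2^(n-1)"
    using is_cell_parent[OF assms(1,2)] by (auto simp: is_cell_def c_def)
  then show ?thesis
    using left_child[of n c] right_child[of n c] unfolding c_def
    by (cases "even q") (auto elim: evenE oddE)
qed

lemma cell_within_ancestor:
  "is_cell (n+j) q \<Longrightarrow> 1 \<le> n \<Longrightarrow>
    is_cell n (q div 2^j) \<and> lp n (q div 2^j) \<le> lp (n+j) q \<and> rp (n+j) q \<le> rp n (q div 2^j)"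
proof (induction j arbitrary: q)
  case (Suc j)
  have parent: "is_cell (n+j) (q div 2)"
    using is_cell_parent[of "n+j" q] Suc.prems by simp
  have "lp (n+j) (q div 2) \<le> lp (n + Suc j) q \<and> rp (n + Suc j) q \<le> rp (n+j) (q div 2)"
    using cell_half_of_parent[of "n+j" q] is_cell_points[OF parent] Suc.prems by auto
  then show ?case
    using Suc.IH[OF parent Suc.prems(2)] by (simp add: div_mult2_eq)
qed simp

lemma is_cell_in_unit_interval:
  assumes "is_cell n k"
  shows "0 \<le> lp n k \<and> rp n k \<le> 1"
proof -
  have "n = 1 + (n - 1)" "k < 2^(n-1)"
    using assms by (auto simp: is_cell_def)
  then have "k div 2^(n-1) = 0" and
    "lp 1 (k div 2^(n-1)) \<le> lp n k \<and> rp n k \<le> rp 1 (k div 2^(n-1))"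
    using cell_within_ancestor[of 1 "n-1" k] assms by auto
  then show ?thesis
    using root_cell by simp
qed

lemma is_cell_points_unit:
  "is_cell p q \<Longrightarrow> 0 \<le> lp p q \<and> lp p q < mp p q \<and> mp p q < rp p q \<and> rp p q \<le> 1"
  using is_cell_points is_cell_in_unit_interval by blast

lemma adjacent_cells: "is_cell n (k+1) \<Longrightarrow> lp n (k+1) = rp n k"
proof (induction n arbitrary: k)
  case (Suc n)
  then have n: "1 \<le> n"
    by (cases n) (auto simp: is_cell_def)
  show ?case
  proof (cases "even k")
    case True
    then obtain c where "k = 2*c" ..
    moreover have "c < 2^(n-1)"
      using Suc.prems \<open>k = 2*c\<close> n by (cases n) (auto simp: is_cell_def)
    ultimately show ?thesis
      using left_child[of n c] right_child[of n c] n by simp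
  next
    case False
    then obtain c where k: "k = 2*c+1" ..
    then have "is_cell n (c+1)"
      using Suc.prems n by (cases n) (auto simp: is_cell_def)
    then show ?thesis
      using left_child[of n "c+1"] right_child[of n c] Suc.IH[of c] k n
      by (simp add: is_cell_def algebra_simps)
  qed
qed (simp add: is_cell_def)

lemma cells_ordered: "is_cell n k \<Longrightarrow> is_cell n k' \<Longrightarrow> k < k' \<Longrightarrow> rp n k \<le> lp n k'"
proof (induction k')
  case (Suc m)
  show ?case
  proof (cases "k = m")
    case False
    then have "is_cell n m" "k < m"
      using Suc.prems by (auto simp: is_cell_def)
    then have "rp n k \<le> lp n m" "lp n m < rp n m"
      using Suc.IH Suc.prems(1) is_cell_points[of n m] by auto
    then show ?thesis
      using adjacent_cells[of n m] Suc.prems(2) by simp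
  qed (use adjacent_cells Suc.prems in simp)
qed simp

lemma descendant_in_half:
  assumes "is_cell p q" "n < p" "1 \<le> n"
  defines "c \<equiv> q div 2^(p-n)"
  shows "is_cell n c \<and> ((lp n c \<le> lp p q \<and> rp p q \<le> mp n c) \<or> (mp n c \<le> lp p q \<and> rp p q \<le> rp n c))"
proof -
  define c' where "c' = q div 2^(p-n-1)"
  have "is_cell (n+1) c' \<and> lp (n+1) c' \<le> lp p q \<and> rp p q \<le> rp (n+1) c'"
    using cell_within_ancestor[of "n+1" "p-n-1" q] assms unfolding c'_def by simp
  moreover have "c' div 2 = c"
    using assms(2) unfolding c'_def c_def
    by (simp add: div_mult2_eq[symmetric]) (metis Suc_diff_Suc power_Suc2)
  ultimately show ?thesis
    using cell_half_of_parent[of n c'] is_cell_parent[of n c'] \<open>1 \<le> n\<close> by auto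
qed

lemma distinct_cells_disjoint:
  "is_cell n c \<Longrightarrow> is_cell n c' \<Longrightarrow> c \<noteq> c' \<Longrightarrow> rp n c \<le> lp n c' \<or> rp n c' \<le> lp n c"
  using cells_ordered[of n c c'] cells_ordered[of n c' c] by (cases "c < c'") auto

lemma coarser_cell_outside:
  assumes nk: "is_cell n k" and pq: "is_cell p q" and "p \<le> n" and ne: "(p, q) \<noteq> (n, k)"
  shows "\<forall>t\<in>{lp p q, mp p q, rp p q}. t \<le> lp n k \<or> rp n k \<le> t"
proof -
  define c where "c = k div 2^(n-p)"
  have anc: "is_cell p c" "lp p c \<le> lp n k" "rp n k \<le> rp p c"
    using cell_within_ancestor[of p "n-p" k] nk pq \<open>p \<le> n\<close> unfolding c_def by (auto simp: is_cell_def)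
  show ?thesis
  proof (cases "q = c")
    case True
    then have "p < n"
      using ne \<open>p \<le> n\<close> c_def by auto
    then have "(lp p q \<le> lp n k \<and> rp n k \<le> mp p q) \<or> (mp p q \<le> lp n k \<and> rp n k \<le> rp p q)"
      using descendant_in_half[OF nk] pq True unfolding c_def by (auto simp: is_cell_def)
    then show ?thesis
      using is_cell_points[OF pq] is_cell_points[OF nk] by auto
  next
    case False
    then show ?thesis
      using distinct_cells_disjoint[OF pq anc(1)] anc is_cell_points[OF pq] is_cell_points[OF nk] by auto
  qed
qed

lemma finer_cell_cases:
  assumes nk: "is_cell n k" and pq: "is_cell p q" and "n < p"
  shows "(lp n k \<le> lp p q \<and> rp p q \<le> mp n k) \<or> (mp n k \<le> lp p q \<and> rp p q \<le> rp n k)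
    \<or> (\<forall>t\<in>{lp p q, mp p q, rp p q}. t \<le> lp n k \<or> rp n k \<le> t)"
proof (cases "q div 2^(p-n) = k")
  case True
  then show ?thesis
    using descendant_in_half[OF pq \<open>n < p\<close>] nk by (auto simp: is_cell_def)
next
  case False
  have anc: "is_cell n (q div 2^(p-n))" "lp n (q div 2^(p-n)) \<le> lp p q" "rp p q \<le> rp n (q div 2^(p-n))"
    using cell_within_ancestor[of n "p-n" q] pq nk \<open>n < p\<close> by (auto simp: is_cell_def)
  then show ?thesis
    using distinct_cells_disjoint[OF nk anc(1)] False is_cell_points[OF pq] by auto
qed

lemma cell_cases:
  assumes "is_cell n k" "is_cell p q" "(p, q) \<noteq> (n, k)"
  shows "(lp n k \<le> lp p q \<and> rp p q \<le> mp n k) \<or> (mp n k \<le> lp p q \<and> rp p q \<le> rp n k)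
    \<or> (\<forall>t\<in>{lp p q, mp p q, rp p q}. t \<le> lp n k \<or> rp n k \<le> t)"
  using coarser_cell_outside[OF assms(1,2) _ assms(3)] finer_cell_cases[OF assms(1,2)]
  by (cases "p \<le> n") auto

end

section \<open>The dual family\<close>

locale diffusion_setting = dyadic_partition lp mp rp for lp mp rp :: "nat \<Rightarrow> nat \<Rightarrow> real" +
  fixes \<alpha> :: "real \<Rightarrow> real^'d::{finite,linorder}^'d::{finite,linorder}"
    and sG :: "real \<Rightarrow> real^'m::finite^'d::{finite,linorder}"
    and F :: "real \<Rightarrow> real \<Rightarrow> real^'d::{finite,linorder}^'d::{finite,linorder}"
  assumes cont_alpha: "continuous_on {0..1} \<alpha>"
    and flow_deriv: "\<And>s t. s \<in> {0..1} \<Longrightarrow> t \<in> {0..1} \<Longrightarrow>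
        ((\<lambda>t. F s t) has_vector_derivative (\<alpha> t ** F s t)) (at t within {0..1})"
    and flow_init: "\<And>s. s \<in> {0..1} \<Longrightarrow> F s s = mat 1"
    and nondeg: "\<And>u v. 0 \<le> u \<Longrightarrow> u < v \<Longrightarrow> v \<le> 1 \<Longrightarrow>
        pos_def_mat (F u v ** hu F sG u u v ** transpose (F u v))"
begin

abbreviation "g \<equiv> gg F"
abbreviation "h \<equiv> hh F sG"
abbreviation "\<sigma> \<equiv> sig F sG lp mp rp"
abbreviation "\<psi> \<equiv> psi F sG lp mp rp"
abbreviation "\<Delta> \<equiv> Delta F sG lp mp rp"

lemma flow_composition: "s \<in> {0..1} \<Longrightarrow> u \<in> {0..1} \<Longrightarrow> t \<in> {0..1} \<Longrightarrow> F s t = F u t ** F s u"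
  by (rule flow_cocycle[OF cont_alpha flow_deriv flow_init])

lemma invertible_g:
  assumes "t \<in> {0..1}"
  shows "invertible (g t)"
proof -
  have "F t 0 ** F 0 t = mat 1"
    using flow_composition[of 0 t 0] flow_init[of 0] assms by simp
  then show ?thesis
    unfolding gg_def using invertible_left_inverse by blast
qed

lemma h_integral: "h s t = integral {s..t} (\<lambda>w. F w 0 ** Gam sG w ** transpose (F w 0))"
  by (simp add: hh_def hu_def)

lemma integrable_h_integrand:
  "(\<lambda>w. F w 0 ** Gam sG w ** transpose (F w 0)) integrable_on {s..t}" if "0 \<le> s" "t \<le> 1"
proof -
  have "(\<lambda>w. F w 0 ** Gam sG w ** transpose (F w 0)) integrable_on {0..1}"
  proof (rule ccontr)
    assume "\<not> ?thesis"
    then have "h 0 1 = 0"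
      unfolding h_integral by (rule not_integrable_integral)
    then show False
      using nondeg[of 0 1] by (simp add: hh_def not_pos_def_mat_0)
  qed
  then show ?thesis
    by (rule integrable_subinterval_real) (use that in auto)
qed

lemma hu_congruence:
  assumes "u \<in> {0..1}" "s \<in> {0..1}" "t \<in> {0..1}"
  shows "hu F sG u s t = g u ** h s t ** transpose (g u)"
proof -
  have "hu F sG u s t = integral {s..t} (\<lambda>w. g u ** (F w 0 ** Gam sG w ** transpose (F w 0)) ** transpose (g u))"
    unfolding hu_def
  proof (rule integral_cong)
    fix w assume "w \<in> {s..t}"
    then have "F w u = g u ** F w 0"
      using flow_composition[of w 0 u] assms by (auto simp: gg_def)
    then show "F w u ** Gam sG w ** transpose (F w u)
        = g u ** (F w 0 ** Gam sG w ** transpose (F w 0)) ** transpose (g u)"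
      by (simp add: matrix_transpose_mul matrix_mul_assoc)
  qed
  also have "\<dots> = g u ** h s t ** transpose (g u)"
    unfolding h_integral using assms
    by (intro integral_linear[OF integrable_h_integrand bounded_linear_sandwich, unfolded o_def]) auto
  finally show ?thesis .
qed

lemma h_symmetric:
  assumes "0 \<le> s" "t \<le> 1"
  shows "transpose (h s t) = h s t"
proof -
  have "transpose (h s t) = integral {s..t} (\<lambda>w. transpose (F w 0 ** Gam sG w ** transpose (F w 0)))"
    unfolding h_integral using assms
    by (intro integral_linear[OF integrable_h_integrand bounded_linear_transpose, unfolded o_def, symmetric])
  also have "\<dots> = h s t"
    unfolding h_integral by (simp add: Gam_def matrix_transpose_mul matrix_mul_assoc)
  finally show ?thesis .
qed

lemma h_additive:
  assumes "0 \<le> a" "a \<le> b" "b \<le> c" "c \<le> 1"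
  shows "h a b + h b c = h a c"
  unfolding h_integral
  by (rule Henstock_Kurzweil_Integration.integral_combine)
    (use assms in \<open>auto intro: integrable_h_integrand\<close>)

lemma h_from_origin:
  assumes "0 \<le> a" "a \<le> b" "b \<le> 1"
  shows "h a b = h 0 b - h 0 a"
  using h_additive[of 0 a b] assms by (simp add: algebra_simps)

lemma h_pos_def:
  assumes "0 \<le> u" "u < v" "v \<le> 1"
  shows "pos_def_mat (h u v)"
proof -
  have "F u v ** g u = g v"
    using flow_composition[of 0 u v] assms by (simp add: gg_def)
  moreover have "F u v ** hu F sG u u v ** transpose (F u v)
      = (F u v ** g u) ** h u v ** transpose (F u v ** g u)"
    using hu_congruence[of u u v] assms by (simp add: matrix_transpose_mul matrix_mul_assoc)
  ultimately show ?thesis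
    using nondeg[OF assms] pos_def_mat_congruence_iff[OF invertible_g[of v]] assms by simp
qed

lemma sig_cell:
  assumes "is_cell p q"
  defines "l \<equiv> lp p q" and "m \<equiv> mp p q" and "r \<equiv> rp p q"
  shows "\<sigma> p q ** transpose (\<sigma> p q) = g m ** parallel_sum (h l m) (h m r) ** transpose (g m)"
proof -
  have lmr: "0 \<le> l" "l < m" "m < r" "r \<le> 1"
    using is_cell_points_unit[OF assms(1)] by (auto simp: l_def m_def r_def)
  have A: "pos_def_mat (h l m)" "transpose (h l m) = h l m"
    and B: "pos_def_mat (h m r)" "transpose (h m r) = h m r"
    using lmr h_pos_def h_symmetric by auto
  have G: "invertible (g m)"
    using invertible_g lmr by simp
  have "hu F sG m l m ** matrix_inv (hu F sG m l r) ** hu F sG m m r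
      = g m ** parallel_sum (h l m) (h m r) ** transpose (g m)"
    using hu_congruence[of m] lmr h_additive[of l m r]
      congruence_mult_matrix_inv[OF G pos_def_mat_invertible[OF pos_def_mat_add[OF A(1) B(1)]]]
    by (simp add: parallel_sum_def)
  moreover have "transpose (g m ** parallel_sum (h l m) (h m r) ** transpose (g m))
      = g m ** parallel_sum (h l m) (h m r) ** transpose (g m)"
    using symmetric_parallel_sum[OF A(1) B(1) A(2) B(2)] by (simp add: matrix_transpose_mul matrix_mul_assoc)
  moreover have "pos_def_mat (g m ** parallel_sum (h l m) (h m r) ** transpose (g m))"
    using pos_def_mat_congruence[OF G pos_def_parallel_sum[OF A(1) B(1)]] .
  ultimately show ?thesis
    using assms(1) cholesky_mult_transpose
    by (auto simp: sig_def Let_def is_cell_def l_def m_def r_def)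
qed

lemma sig_root: "\<sigma> 0 0 ** transpose (\<sigma> 0 0) = g 1 ** h 0 1 ** transpose (g 1)"
proof -
  have "transpose (g 1 ** h 0 1 ** transpose (g 1)) = g 1 ** h 0 1 ** transpose (g 1)"
    using h_symmetric[of 0 1] by (simp add: matrix_transpose_mul matrix_mul_assoc)
  moreover have "pos_def_mat (g 1 ** h 0 1 ** transpose (g 1))"
    using pos_def_mat_congruence[OF invertible_g h_pos_def[of 0 1]] by simp
  ultimately show ?thesis
    by (simp add: sig_def cholesky_mult_transpose)
qed

definition h_affine_on :: "real set \<Rightarrow> (real \<Rightarrow> real^'d::{finite,linorder}^'d::{finite,linorder}) \<Rightarrow> bool" where
  "h_affine_on T x \<longleftrightarrow> (\<exists>C D. \<forall>t\<in>T. x t = g t ** (h 0 t ** C + D))"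

lemma h_affine_on_subset: "h_affine_on T x \<Longrightarrow> S \<subseteq> T \<Longrightarrow> h_affine_on S x"
  unfolding h_affine_on_def by blast

lemma h_affine_on_zero: "(\<And>t. t \<in> T \<Longrightarrow> x t = 0) \<Longrightarrow> h_affine_on T x"
  unfolding h_affine_on_def by (rule exI[of _ 0], rule exI[of _ 0]) simp

lemma Delta_cell:
  fixes x :: "real \<Rightarrow> real^'d::{finite,linorder}^'d::{finite,linorder}"
  assumes "is_cell p q"
  defines "l \<equiv> lp p q" and "m \<equiv> mp p q" and "r \<equiv> rp p q"
    and "X \<equiv> \<lambda>t. matrix_inv (g t) ** x t"
  shows "\<Delta> p q x = transpose (\<sigma> p q) ** transpose (matrix_inv (g m))
    ** ((matrix_inv (h l m) + matrix_inv (h m r)) ** X m - matrix_inv (h l m) ** X l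
        - matrix_inv (h m r) ** X r)"
proof -
  define A B where "A = h l m" and "B = h m r"
  have lmr: "0 \<le> l" "l < m" "m < r" "r \<le> 1"
    using is_cell_points_unit[OF assms(1)] by (auto simp: l_def m_def r_def)
  have "\<Delta> p q x = transpose (transpose (g m) ** transpose (matrix_inv (\<sigma> p q))) ** X m
      - transpose (matrix_inv A ** matrix_inv (g m) ** \<sigma> p q) ** X l
      - transpose (matrix_inv B ** matrix_inv (g m) ** \<sigma> p q) ** X r"
    using assms(1)
    by (simp add: Delta_def Lm_def Rm_def Mm_def Let_def is_cell_def matrix_mul_assoc
        X_def A_def B_def l_def m_def r_def)
  also have "\<dots> = transpose (\<sigma> p q) ** transpose (matrix_inv (g m))
    ** ((matrix_inv A + matrix_inv B) ** X m - matrix_inv A ** X l - matrix_inv B ** X r)"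
    using lmr sig_cell[OF assms(1)] unfolding A_def B_def l_def m_def r_def
    by (intro three_point_pairing invertible_g h_pos_def h_symmetric) auto
  finally show ?thesis
    by (simp add: A_def B_def)
qed

lemma Delta_h_affine:
  assumes "is_cell p q" and "h_affine_on {lp p q, mp p q, rp p q} x"
  shows "\<Delta> p q x = 0"
proof -
  define l m r where "l = lp p q" and "m = mp p q" and "r = rp p q"
  have lmr: "0 \<le> l" "l < m" "m < r" "r \<le> 1"
    using is_cell_points_unit[OF assms(1)] by (auto simp: l_def m_def r_def)
  obtain C D where x: "\<And>t. t \<in> {l, m, r} \<Longrightarrow> x t = g t ** (h 0 t ** C + D)"
    using assms(2) unfolding h_affine_on_def l_def m_def r_def by blast
  define X where "X t = matrix_inv (g t) ** x t" for t
  have X: "X t = h 0 t ** C + D" if "t \<in> {l, m, r}" for t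
    using x[OF that] invertible_g[of t] that lmr
    by (auto simp: X_def matrix_mul_assoc matrix_inv_left)
  have A: "invertible (h l m)"
    using lmr by (intro pos_def_mat_invertible h_pos_def) auto
  have B: "invertible (h m r)"
    using lmr by (intro pos_def_mat_invertible h_pos_def) auto
  have XA: "X m - X l = h l m ** C"
    using X[of m] X[of l] h_from_origin[of l m] lmr by (simp add: matrix_diff_rdistrib)
  have XB: "X r - X m = h m r ** C"
    using X[of r] X[of m] h_from_origin[of m r] lmr by (simp add: matrix_diff_rdistrib)
  have "(matrix_inv (h l m) + matrix_inv (h m r)) ** X m - matrix_inv (h l m) ** X l
      - matrix_inv (h m r) ** X r
      = matrix_inv (h l m) ** (X m - X l) - matrix_inv (h m r) ** (X r - X m)"
    by (simp add: matrix_add_rdistrib matrix_diff_ldistrib)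
  also have "\<dots> = 0"
    using A B by (simp add: XA XB matrix_mul_assoc matrix_inv_left)
  finally show ?thesis
    using Delta_cell[OF assms(1), of x] by (simp add: X_def l_def m_def r_def)
qed

lemma psi_outside:
  assumes "is_cell n k" "t \<le> lp n k \<or> rp n k \<le> t"
  shows "\<psi> n k t = 0"
  using assms is_cell_points[OF assms(1)]
  by (auto simp: psi_def is_cell_def hh_def hu_def)

lemma psi_left_half:
  assumes "is_cell n k"
  shows "h_affine_on {lp n k..mp n k} (\<psi> n k)"
  unfolding h_affine_on_def
proof (intro exI ballI)
  fix t assume t: "t \<in> {lp n k..mp n k}"
  then have "h (lp n k) t = h 0 t - h 0 (lp n k)"
    using is_cell_points_unit[OF assms] by (intro h_from_origin) auto
  then show "\<psi> n k t = g t ** (h 0 t ** Lm F sG lp mp rp n k + - (h 0 (lp n k) ** Lm F sG lp mp rp n k))"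
    using assms t
    by (simp add: psi_def is_cell_def matrix_diff_ldistrib matrix_diff_rdistrib matrix_mul_assoc)
qed

lemma psi_right_half_eq:
  assumes "is_cell n k" "mp n k \<le> t" "t \<le> rp n k"
  shows "\<psi> n k t = g t ** h t (rp n k) ** Rm F sG lp mp rp n k"
proof (cases "t = mp n k")
  case True
  define l m r where "l = lp n k" and "m = mp n k" and "r = rp n k"
  have lmr: "0 \<le> l" "l < m" "m < r" "r \<le> 1"
    using is_cell_points_unit[OF assms(1)] by (auto simp: l_def m_def r_def)
  have "invertible (h l m)" "invertible (h m r)"
    using lmr by (intro pos_def_mat_invertible h_pos_def; simp)+
  then have "h l m ** Lm F sG lp mp rp n k = h m r ** Rm F sG lp mp rp n k"
    using assms(1)
    by (simp add: Lm_def Rm_def is_cell_def matrix_mul_assoc matrix_inv_right l_def m_def r_def)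
  then show ?thesis
    using True assms lmr by (simp add: psi_def is_cell_def l_def m_def r_def flip: matrix_mul_assoc)
qed (use assms is_cell_points[OF assms(1)] in \<open>auto simp: psi_def is_cell_def\<close>)

lemma psi_right_half:
  assumes "is_cell n k"
  shows "h_affine_on {mp n k..rp n k} (\<psi> n k)"
  unfolding h_affine_on_def
proof (intro exI ballI)
  fix t assume t: "t \<in> {mp n k..rp n k}"
  then have "h t (rp n k) = h 0 (rp n k) - h 0 t"
    using is_cell_points_unit[OF assms] by (intro h_from_origin) auto
  then show "\<psi> n k t = g t ** (h 0 t ** - Rm F sG lp mp rp n k + h 0 (rp n k) ** Rm F sG lp mp rp n k)"
    using psi_right_half_eq[OF assms] t
    by (simp add: matrix_add_ldistrib matrix_diff_ldistrib matrix_diff_rdistrib matrix_neg_rdistrib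
        matrix_mul_assoc)
qed

lemma psi_root: "h_affine_on {0..1} (\<psi> 0 0)"
  unfolding h_affine_on_def psi_def by (intro exI[of _ "Lm F sG lp mp rp 0 0"] exI[of _ 0]) (simp add: matrix_mul_assoc)

lemma Delta_cell_self:
  assumes "is_cell p q"
  shows "\<Delta> p q (\<psi> p q) = mat 1"
proof -
  define l m r where "l = lp p q" and "m = mp p q" and "r = rp p q"
  define A B where "A = h l m" and "B = h m r"
  have lmr: "0 \<le> l" "l < m" "m < r" "r \<le> 1"
    using is_cell_points_unit[OF assms] by (auto simp: l_def m_def r_def)
  have A: "pos_def_mat A" and B: "pos_def_mat B" and G: "invertible (g m)"
    using lmr h_pos_def invertible_g by (auto simp: A_def B_def)
  have "matrix_inv (g m) ** \<psi> p q m = A ** Lm F sG lp mp rp p q"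
    using psi_left_half assms lmr G
    by (simp add: psi_def is_cell_def matrix_mul_assoc matrix_inv_left A_def l_def m_def)
  also have "\<dots> = matrix_inv (g m) ** \<sigma> p q"
    using assms A by (simp add: Lm_def is_cell_def matrix_mul_assoc matrix_inv_right
        pos_def_mat_invertible A_def l_def m_def)
  finally have Xm: "matrix_inv (g m) ** \<psi> p q m = matrix_inv (g m) ** \<sigma> p q" .
  have "\<psi> p q l = 0" "\<psi> p q r = 0"
    using psi_outside[OF assms] by (auto simp: l_def r_def)
  then have "\<Delta> p q (\<psi> p q)
      = transpose (\<sigma> p q) ** transpose (matrix_inv (g m)) ** (matrix_inv A + matrix_inv B)
        ** matrix_inv (g m) ** \<sigma> p q"
    using Delta_cell[OF assms, of "\<psi> p q", folded l_def m_def r_def A_def B_def]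
    by (simp add: Xm matrix_mul_assoc A_def B_def)
  also have "matrix_inv A + matrix_inv B = matrix_inv (parallel_sum A B)"
    using parallel_sum_inverse[OF A B] by (rule matrix_inv_unique[symmetric])
  also have "transpose (\<sigma> p q) ** transpose (matrix_inv (g m)) ** matrix_inv (parallel_sum A B)
        ** matrix_inv (g m) ** \<sigma> p q = mat 1"
  proof (rule cholesky_normalises_congruence[OF G])
    show "invertible (parallel_sum A B)"
      using pos_def_mat_invertible[OF pos_def_parallel_sum[OF A B]] .
    show "\<sigma> p q ** transpose (\<sigma> p q) = g m ** parallel_sum A B ** transpose (g m)"
      using sig_cell[OF assms] by (simp add: A_def B_def l_def m_def r_def)
  qed
  finally show ?thesis .
qed

lemma Delta_root:
  assumes "(n, k) \<in> idx"
  shows "\<Delta> 0 0 (\<psi> n k) = (if (n, k) = (0, 0) then mat 1 else 0)"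
proof (cases "n = 0")
  case True
  then have k: "k = 0"
    using assms by (auto simp: idx_def)
  have G: "invertible (g 1)"
    by (simp add: invertible_g)
  have H: "pos_def_mat (h 0 1)" "transpose (h 0 1) = h 0 1"
    by (simp_all add: h_pos_def h_symmetric)
  have "\<Delta> 0 0 (\<psi> 0 0) = transpose (Lm F sG lp mp rp 0 0) ** h 0 1 ** Lm F sG lp mp rp 0 0"
    using G by (simp add: Delta_def psi_def matrix_mul_assoc matrix_inv_cancel_left)
  also have "\<dots> = transpose (\<sigma> 0 0) ** transpose (matrix_inv (g 1)) ** matrix_inv (h 0 1)
      ** matrix_inv (g 1) ** \<sigma> 0 0"
    using H pos_def_mat_invertible[OF H(1)]
    by (simp add: Lm_def matrix_transpose_mul symmetric_matrix_inv matrix_mul_assoc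
        matrix_inv_cancel_left)
  also have "\<dots> = mat 1"
    using pos_def_mat_invertible[OF H(1)] by (rule cholesky_normalises_congruence[OF G _ sig_root])
  finally show ?thesis
    using True k by simp
next
  case False
  then have "is_cell n k"
    using assms by (auto simp: idx_def is_cell_def)
  then have "\<psi> n k 1 = 0"
    using psi_outside is_cell_in_unit_interval by blast
  then show ?thesis
    using False by (simp add: Delta_def)
qed

lemma psi_h_affine_at_other_cell:
  assumes pq: "is_cell p q" and nk: "(n, k) \<in> idx" and ne: "(n, k) \<noteq> (p, q)"
  shows "h_affine_on {lp p q, mp p q, rp p q} (\<psi> n k)"
proof (cases "n = 0")
  case True
  then have "k = 0"
    using nk by (auto simp: idx_def)
  then show ?thesis
    using h_affine_on_subset[OF psi_root] is_cell_points_unit[OF pq] True by auto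
next
  case False
  then have nk': "is_cell n k"
    using nk by (auto simp: idx_def is_cell_def)
  from cell_cases[OF nk' pq] ne
  consider "lp n k \<le> lp p q" "rp p q \<le> mp n k" | "mp n k \<le> lp p q" "rp p q \<le> rp n k"
    | "\<forall>t\<in>{lp p q, mp p q, rp p q}. t \<le> lp n k \<or> rp n k \<le> t"
    by auto
  then show ?thesis
  proof cases
    case 1
    then show ?thesis
      using h_affine_on_subset[OF psi_left_half[OF nk']] is_cell_points[OF pq] by auto
  next
    case 2
    then show ?thesis
      using h_affine_on_subset[OF psi_right_half[OF nk']] is_cell_points[OF pq] by auto
  next
    case 3
    then show ?thesis
      using psi_outside[OF nk'] by (intro h_affine_on_zero) blast
  qed
qed

lemma Delta_cell_psi:
  assumes pq: "is_cell p q" and nk: "(n, k) \<in> idx"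
  shows "\<Delta> p q (\<psi> n k) = (if (n, k) = (p, q) then mat 1 else 0)"
proof (cases "(n, k) = (p, q)")
  case True
  then show ?thesis
    using Delta_cell_self[OF pq] by simp
next
  case False
  then have "\<Delta> p q (\<psi> n k) = 0"
    by (intro Delta_h_affine[OF pq] psi_h_affine_at_other_cell[OF pq nk])
  with False show ?thesis
    by auto
qed

end

theorem proposition5:
  fixes \<alpha> :: "real \<Rightarrow> real^'d::{finite,linorder}^'d::{finite,linorder}"
    and sG :: "real \<Rightarrow> real^'m::finite^'d::{finite,linorder}"
    and F :: "real \<Rightarrow> real \<Rightarrow> real^'d::{finite,linorder}^'d::{finite,linorder}"
    and \<rho> :: real
    and lp mp rp :: "nat \<Rightarrow> nat \<Rightarrow> real"
  assumes cont_alpha: "continuous_on {0..1} \<alpha>"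
    and cont_sG: "continuous_on {0..1} sG"
    and flow_deriv: "\<And>s t. s \<in> {0..1} \<Longrightarrow> t \<in> {0..1} \<Longrightarrow>
        ((\<lambda>t. F s t) has_vector_derivative (\<alpha> t ** F s t)) (at t within {0..1})"
    and flow_init: "\<And>s. s \<in> {0..1} \<Longrightarrow> F s s = mat 1"
    and nondeg: "\<And>u v. 0 \<le> u \<Longrightarrow> u < v \<Longrightarrow> v \<le> 1 \<Longrightarrow>
        pos_def_mat (F u v ** hu F sG u u v ** transpose (F u v))"
    and rho: "0 < \<rho>" "\<rho> < 1"
    and part_init: "lp 1 0 = 0" "rp 1 0 = 1"
    and part_lr: "\<And>n k. n \<ge> 1 \<Longrightarrow> k < 2^(n-1) \<Longrightarrow> lp n k < mp n k \<and> mp n k < rp n k"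
    and part_left: "\<And>n k. n \<ge> 1 \<Longrightarrow> k < 2^(n-1) \<Longrightarrow>
        lp (n+1) (2*k) = lp n k \<and> rp (n+1) (2*k) = mp n k"
    and part_right: "\<And>n k. n \<ge> 1 \<Longrightarrow> k < 2^(n-1) \<Longrightarrow>
        lp (n+1) (2*k+1) = mp n k \<and> rp (n+1) (2*k+1) = rp n k"
    and part_ratio: "\<And>n k. n \<ge> 1 \<Longrightarrow> k < 2^(n-1) \<Longrightarrow>
        max (rp n k - mp n k) (mp n k - lp n k) < \<rho> * (rp n k - lp n k)"
    and nk: "(n, k) \<in> idx" and pq: "(p, q) \<in> idx"
  shows "Delta F sG lp mp rp p q (psi F sG lp mp rp n k)
           = (if (n, k) = (p, q) then mat 1 else 0)"
proof -
  interpret diffusion_setting lp mp rp \<alpha> sG F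
    by unfold_locales (fact part_init part_lr part_left part_right cont_alpha flow_deriv flow_init nondeg)+
  show ?thesis
  proof (cases "p = 0")
    case True
    then have "q = 0"
      using pq by (auto simp: idx_def)
    then show ?thesis
      using Delta_root[OF nk] True by auto
  next
    case False
    then have "is_cell p q"
      using pq by (auto simp: idx_def is_cell_def)
    then show ?thesis
      by (rule Delta_cell_psi[OF _ nk])
  qed
qed

end
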